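(* Let $R$ be a commutative ring with $\mathbb{Q}\subseteq R$, $\mathcal{A}$ a commutative unital $R$-algebra, and $\mathcal{E}$ a finitely generated projective $\mathcal{A}$-module with a symmetric, strongly nondegenerate, full $\mathcal{A}$-bilinear form $\langle\cdot,\cdot\rangle$. Let $r\ge2$ and $\mathsf{C}\in\mathcal{C}^r(\mathcal{E})$. Then for all $x_1,\dots,x_{r-1}\in\mathcal{E}$ and $a\in\mathcal{A}$: $$\mathsf{C}(x_1,\dots,x_{r-2},ax_{r-1})=a\,\mathsf{C}(x_1,\dots,x_{r-1})+\big(\sigma_{\mathsf{C}}(x_1,\dots,x_{r-2})a\big)\,x_{r-1}.$$
   Context: Strongly nondegenerate: $\mathcal{E}\to\operatorname{Hom}_{\mathcal{A}}(\mathcal{E},\mathcal{A})$ is an isomorphism. Full: every $a\in\mathcal{A}$ is a finite sum $\sum_i\langle x_i,y_i\rangle$. $\operatorname{Der}(\mathcal{A})$: $R$-linear derivations of $\mathcal{A}$. For $r\ge2$, $\mathcal{C}^r(\mathcal{E})$ is the set of $\mathsf{C}\in\operatorname{Hom}_R(\mathcal{E}^{\otimes_R(r-1)},\mathcal{E})$ admitting an $R$-multilinear symbol $\sigma_{\mathsf{C}}:\mathcal{E}^{\otimes(r-2)}\to\operatorname{Der}(\mathcal{A})$ (unique) with two properties: (1) $\sigma_{\mathsf{C}}(x_1,\dots,x_{r-2})\langle u,w\rangle=\langle\mathsf{C}(x_1,\dots,x_{r-2},u),w\rangle+\langle u,\mathsf{C}(x_1,\dots,x_{r-2},w)\rangle$;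 (2) for $r\ge3$ and $1\le i\le r-2$, $\langle\mathsf{C}(\dots,x_i,x_{i+1},\dots)+\mathsf{C}(\dots,x_{i+1},x_i,\dots),u\rangle=\sigma_{\mathsf{C}}(x_1,\dots,\widehat{x_i},\widehat{x_{i+1}},\dots,x_{r-1},u)\langle x_i,x_{i+1}\rangle$. For $r=2$, $\sigma_{\mathsf{C}}$ is a single derivation. *)

theory Defs
  imports Complex_Main
begin

text \<open>R is a commutative ring (type 'r), A a commutative unital R-algebra (type 'a, with
structure map phi), E an A-module (type 'e, scalar multiplication smul).
The R-module structure of E and of A is induced via phi.\<close>

definition contains_rationals :: "'r::comm_ring_1 itself \<Rightarrow> bool" where
  "contains_rationals _ \<longleftrightarrow> (\<forall>n::nat. n > 0 \<longrightarrow> (\<exists>q::'r. of_nat n * q = 1))"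

definition ring_hom_map :: "('r::comm_ring_1 \<Rightarrow> 'a::comm_ring_1) \<Rightarrow> bool" where
  "ring_hom_map phi \<longleftrightarrow> phi 1 = 1 \<and> (\<forall>x y. phi (x + y) = phi x + phi y)
     \<and> (\<forall>x y. phi (x * y) = phi x * phi y)"

definition Rlin_map :: "('r \<Rightarrow> 'a) \<Rightarrow> ('a \<Rightarrow> 'e::ab_group_add \<Rightarrow> 'e) \<Rightarrow> ('a \<Rightarrow> 'b::ab_group_add \<Rightarrow> 'b)
    \<Rightarrow> ('e \<Rightarrow> 'b) \<Rightarrow> bool" where
  "Rlin_map phi s1 s2 f \<longleftrightarrow> (\<forall>x y. f (x + y) = f x + f y)
     \<and> (\<forall>c x. f (s1 (phi c) x) = s2 (phi c) (f x))"

definition Rmultilin :: "('r \<Rightarrow> 'a) \<Rightarrow> ('a \<Rightarrow> 'e::ab_group_add \<Rightarrow> 'e) \<Rightarrow> ('a \<Rightarrow> 'b::ab_group_add \<Rightarrow> 'b)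
    \<Rightarrow> nat \<Rightarrow> ('e list \<Rightarrow> 'b) \<Rightarrow> bool" where
  "Rmultilin phi s1 s2 n F \<longleftrightarrow>
     (\<forall>xs k. length xs = n \<and> k < n \<longrightarrow> Rlin_map phi s1 s2 (\<lambda>x. F (xs[k := x])))"

definition is_R_derivation :: "('r \<Rightarrow> 'a::comm_ring_1) \<Rightarrow> ('a \<Rightarrow> 'a) \<Rightarrow> bool" where
  "is_R_derivation phi D \<longleftrightarrow> Rlin_map phi (*) (*) D
     \<and> (\<forall>a b. D (a * b) = a * D b + D a * b)"

text \<open>Finitely generated projective A-module (finite dual basis).\<close>
definition fg_projective :: "('a::comm_ring_1 \<Rightarrow> 'e::ab_group_add \<Rightarrow> 'e) \<Rightarrow> bool" where
  "fg_projective smul \<longleftrightarrow> (\<exists>n::nat. \<exists>xs::nat \<Rightarrow> 'e. \<exists>fs::nat \<Rightarrow> 'e \<Rightarrow> 'a.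
     (\<forall>i<n. module_hom smul (*) (fs i)) \<and> (\<forall>x. x = (\<Sum>i<n. smul (fs i x) (xs i))))"

definition A_bilinear :: "('a::comm_ring_1 \<Rightarrow> 'e::ab_group_add \<Rightarrow> 'e) \<Rightarrow> ('e \<Rightarrow> 'e \<Rightarrow> 'a) \<Rightarrow> bool" where
  "A_bilinear smul B \<longleftrightarrow> (\<forall>x. module_hom smul (*) (B x)) \<and> (\<forall>y. module_hom smul (*) (\<lambda>x. B x y))"

definition symmetric_form :: "('e \<Rightarrow> 'e \<Rightarrow> 'a) \<Rightarrow> bool" where
  "symmetric_form B \<longleftrightarrow> (\<forall>x y. B x y = B y x)"

definition strongly_nondegenerate :: "('a::comm_ring_1 \<Rightarrow> 'e::ab_group_add \<Rightarrow> 'e) \<Rightarrow> ('e \<Rightarrow> 'e \<Rightarrow> 'a) \<Rightarrow> bool" where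
  "strongly_nondegenerate smul B \<longleftrightarrow> bij_betw B UNIV {f. module_hom smul (*) f}"

definition full_form :: "('e \<Rightarrow> 'e \<Rightarrow> 'a::comm_ring_1) \<Rightarrow> bool" where
  "full_form B \<longleftrightarrow> (\<forall>a. \<exists>ps::('e \<times> 'e) list. a = (\<Sum>p\<leftarrow>ps. B (fst p) (snd p)))"

text \<open>sigma is a symbol for C in the sense of the definition of C^r(E); arguments of C are
lists of length r-1, arguments of sigma lists of length r-2 (positions are 0-indexed).\<close>
definition is_symbol :: "('r \<Rightarrow> 'a::comm_ring_1) \<Rightarrow> ('a \<Rightarrow> 'e::ab_group_add \<Rightarrow> 'e) \<Rightarrow> ('e \<Rightarrow> 'e \<Rightarrow> 'a)
    \<Rightarrow> nat \<Rightarrow> ('e list \<Rightarrow> 'e) \<Rightarrow> ('e list \<Rightarrow> 'a \<Rightarrow> 'a) \<Rightarrow> bool" where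
  "is_symbol phi smul B r C \<sigma> \<longleftrightarrow>
     (\<forall>a. Rmultilin phi smul (*) (r - 2) (\<lambda>xs. \<sigma> xs a))
   \<and> (\<forall>xs. length xs = r - 2 \<longrightarrow> is_R_derivation phi (\<sigma> xs))
   \<and> (\<forall>xs u w. length xs = r - 2 \<longrightarrow>
        \<sigma> xs (B u w) = B (C (xs @ [u])) w + B u (C (xs @ [w])))
   \<and> (r \<ge> 3 \<longrightarrow> (\<forall>xs u i. length xs = r - 1 \<and> i < r - 2 \<longrightarrow>
        B (C xs + C (xs[i := xs ! Suc i, Suc i := xs ! i])) u
          = \<sigma> (take i xs @ drop (i + 2) xs @ [u]) (B (xs ! i) (xs ! Suc i))))"

definition in_Cr :: "('r \<Rightarrow> 'a::comm_ring_1) \<Rightarrow> ('a \<Rightarrow> 'e::ab_group_add \<Rightarrow> 'e) \<Rightarrow> ('e \<Rightarrow> 'e \<Rightarrow> 'a)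
    \<Rightarrow> nat \<Rightarrow> ('e list \<Rightarrow> 'e) \<Rightarrow> bool" where
  "in_Cr phi smul B r C \<longleftrightarrow> Rmultilin phi smul smul (r - 1) C \<and> (\<exists>\<sigma>. is_symbol phi smul B r C \<sigma>)"

end

theory Submission
  imports Defs
begin

text \<open>Apply the symbol to \<open>\<langle>a x, w\<rangle> = a \<langle>x, w\<rangle>\<close>: the compatibility condition expands the left
side through \<open>C\<close>, the Leibniz rule of the derivation \<open>\<sigma>\<close> expands the right side, and
comparing both gives \<open>\<langle>C(\<dots>, a x), w\<rangle> = \<langle>a C(\<dots>, x) + \<sigma>(a) x, w\<rangle>\<close> for every \<open>w\<close>.
Nondegeneracy of the form then identifies the two vectors.\<close>

lemma inj_form_if_strongly_nondegenerate:
  "strongly_nondegenerate smul B \<Longrightarrow> inj B"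
  unfolding strongly_nondegenerate_def bij_betw_def by blast

lemma Leibniz_rule_if_compatible_with_form:
  fixes smul :: "'a::comm_ring_1 \<Rightarrow> 'e::ab_group_add \<Rightarrow> 'e"
    and B :: "'e \<Rightarrow> 'e \<Rightarrow> 'a"
  assumes linear_left: "\<And>w. module_hom smul (*) (\<lambda>u. B u w)"
    and nondegenerate: "inj B"
    and Leibniz: "\<And>p q. D (p * q) = p * D q + D p * q"
    and compatible: "\<And>u w. D (B u w) = B (N u) w + B u (N w)"
  shows "N (smul a x) = smul a (N x) + smul (D a) x"
proof -
  have add: "B (u + v) w = B u w + B v w" for u v w
    using linear_left module_hom.add by fastforce
  have scale: "B (smul c u) w = c * B u w" for c u w
    using linear_left module_hom.scale by fastforce
  have "B (N (smul a x)) w = B (smul a (N x) + smul (D a) x) w" for w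
  proof -
    have "B (N (smul a x)) w = D (B (smul a x) w) - B (smul a x) (N w)"
      using compatible[of "smul a x" w] by simp
    also have "\<dots> = a * D (B x w) + D a * B x w - a * B x (N w)"
      by (simp add: scale Leibniz)
    also have "\<dots> = a * B (N x) w + D a * B x w"
      using compatible[of x w] by (simp add: algebra_simps)
    also have "\<dots> = B (smul a (N x) + smul (D a) x) w"
      by (simp add: add scale)
    finally show ?thesis .
  qed
  then show ?thesis
    using nondegenerate by (meson ext injD)
qed

theorem mainTheorem10:
  fixes phi :: "'r::comm_ring_1 \<Rightarrow> 'a::comm_ring_1"
    and smul :: "'a \<Rightarrow> 'e::ab_group_add \<Rightarrow> 'e"
    and B :: "'e \<Rightarrow> 'e \<Rightarrow> 'a"
    and r :: nat
    and C :: "'e list \<Rightarrow> 'e"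
    and \<sigma> :: "'e list \<Rightarrow> 'a \<Rightarrow> 'a"
  assumes "contains_rationals TYPE('r)"
    and "ring_hom_map phi"
    and "module smul"
    and "fg_projective smul"
    and "A_bilinear smul B"
    and "symmetric_form B"
    and "strongly_nondegenerate smul B"
    and "full_form B"
    and "r \<ge> 2"
    and "in_Cr phi smul B r C"
    and "is_symbol phi smul B r C \<sigma>"
  shows "\<forall>xs x a. length xs = r - 2 \<longrightarrow>
           C (xs @ [smul a x]) = smul a (C (xs @ [x])) + smul (\<sigma> xs a) x"
proof (intro allI impI)
  fix xs :: "'e list" and x :: 'e and a :: 'a
  assume "length xs = r - 2"
  then have Leibniz: "\<And>p q. \<sigma> xs (p * q) = p * \<sigma> xs q + \<sigma> xs p * q"
    and compatible: "\<And>u w. \<sigma> xs (B u w) = B (C (xs @ [u])) w + B u (C (xs @ [w]))"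
    using \<open>is_symbol phi smul B r C \<sigma>\<close> unfolding is_symbol_def is_R_derivation_def by auto
  have linear_left: "\<And>w. module_hom smul (*) (\<lambda>u. B u w)"
    using \<open>A_bilinear smul B\<close> unfolding A_bilinear_def by blast
  show "C (xs @ [smul a x]) = smul a (C (xs @ [x])) + smul (\<sigma> xs a) x"
    using Leibniz_rule_if_compatible_with_form[OF linear_left
        inj_form_if_strongly_nondegenerate[OF \<open>strongly_nondegenerate smul B\<close>] Leibniz compatible] .
qed

end
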